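(* Consider the uniform noising process on $[S]^d$ from $q_0$, fix $T>0$, and let $(\overleftarrow x_t)_{t\in[0,T]}$ be its reverse process. Then for all $0\le\ell<t<T$, $i\in[d]$, $c\in[S]$ and $x_\ell\in[S]^d$, $$\mathbb E_{x_t\sim\overleftarrow q_{t\mid\ell}(\cdot\mid x_\ell)}\big[s_{T-t}(x_t\oplus_ic,x_t)\big]=s_{T-\ell}(x_\ell\oplus_ic,x_\ell).$$ Equivalently, for any function $g$ of $x_\ell$, $\mathbb E_{x_t\sim\overleftarrow q_{t\mid\ell}(\cdot\mid x_\ell)}\big[(s_{T-\ell}(x_\ell\oplus_ic,x_\ell)-s_{T-t}(x_t\oplus_ic,x_t))\,g(x_\ell)\big]=0$.
   Context: Uniform noising process: time-homogeneous CTMC on $[S]^d$ with rates $Q(x,y)=1/S$ if $x,y$ are at Hamming distance one, $0$ at Hamming distance $\ge2$; $q_t$ is its time-$t$ law; $s_t(y,x)=q_t(y)/q_t(x)$. Reverse process on $[0,T]$: the CTMC started from $q_T$ with rates $\overleftarrow Q_t(x,y)=Q(y,x)s_{T-t}(y,x)$ for $x\ne y$, whose time-$t$ marginal is $q_{T-t}$; $\overleftarrow q_{t\mid\ell}(\cdot\mid x_\ell)$ is the conditional law of its state at time $t$ given state $x_\ell$ at time $\ell$. $x\oplus_i c$: $x$ with coordinate $i$ replaced by $(x^i+c)\bmod S$, convention $0\bmod S=S$. *)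

theory Defs
  imports "HOL-Analysis.Analysis" "HOL-Library.FuncSet"
begin

definition states :: "nat \<Rightarrow> nat \<Rightarrow> (nat \<Rightarrow> nat) set" where
  "states S d = ({1..d} \<rightarrow>\<^sub>E {1..S})"

definition hamming :: "nat \<Rightarrow> (nat \<Rightarrow> nat) \<Rightarrow> (nat \<Rightarrow> nat) \<Rightarrow> nat" where
  "hamming d x y = card {i \<in> {1..d}. x i \<noteq> y i}"

definition oplus :: "nat \<Rightarrow> (nat \<Rightarrow> nat) \<Rightarrow> nat \<Rightarrow> nat \<Rightarrow> (nat \<Rightarrow> nat)" where
  "oplus S x i c = x(i := (if (x i + c) mod S = 0 then S else (x i + c) mod S))"

definition Qunif :: "nat \<Rightarrow> nat \<Rightarrow> (nat \<Rightarrow> nat) \<Rightarrow> (nat \<Rightarrow> nat) \<Rightarrow> real" where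
  "Qunif S d x y = (if hamming d x y = 1 then 1 / real S else 0)"

definition gen :: "'a set \<Rightarrow> (real \<Rightarrow> 'a \<Rightarrow> 'a \<Rightarrow> real) \<Rightarrow> real \<Rightarrow> 'a \<Rightarrow> 'a \<Rightarrow> real" where
  "gen X R t x y = (if x = y then - (\<Sum>z\<in>X - {x}. R t x z) else R t x y)"

text \<open>P is the transition function (from start time l, over the time set I) of the CTMC
  on the finite state set X with generator A(t): P(l) = identity and the Kolmogorov forward
  equation d/dt P(t)(x,y) = sum_z P(t)(x,z) A(t)(z,y) holds on I; normalised to 0 outside.\<close>
definition is_transition ::
  "'a set \<Rightarrow> (real \<Rightarrow> 'a \<Rightarrow> 'a \<Rightarrow> real) \<Rightarrow> real set \<Rightarrow> real \<Rightarrow> (real \<Rightarrow> 'a \<Rightarrow> 'a \<Rightarrow> real) \<Rightarrow> bool" where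
  "is_transition X A I l P \<longleftrightarrow>
     (\<forall>x\<in>X. \<forall>y\<in>X. P l x y = (if x = y then 1 else 0)) \<and>
     (\<forall>t\<in>I. \<forall>x\<in>X. \<forall>y\<in>X.
        ((\<lambda>s. P s x y) has_real_derivative (\<Sum>z\<in>X. P t x z * A t z y)) (at t within I)) \<and>
     (\<forall>t x y. (t \<notin> I \<or> x \<notin> X \<or> y \<notin> X) \<longrightarrow> P t x y = 0)"

definition transition ::
  "'a set \<Rightarrow> (real \<Rightarrow> 'a \<Rightarrow> 'a \<Rightarrow> real) \<Rightarrow> real set \<Rightarrow> real \<Rightarrow> (real \<Rightarrow> 'a \<Rightarrow> 'a \<Rightarrow> real)" where
  "transition X A I l = (THE P. is_transition X A I l P)"

definition fwd_kernel :: "nat \<Rightarrow> nat \<Rightarrow> real \<Rightarrow> (nat \<Rightarrow> nat) \<Rightarrow> (nat \<Rightarrow> nat) \<Rightarrow> real" where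
  "fwd_kernel S d = transition (states S d) (gen (states S d) (\<lambda>_. Qunif S d)) {0..} 0"

definition qlaw :: "nat \<Rightarrow> nat \<Rightarrow> ((nat \<Rightarrow> nat) \<Rightarrow> real) \<Rightarrow> real \<Rightarrow> (nat \<Rightarrow> nat) \<Rightarrow> real" where
  "qlaw S d q0 t y = (\<Sum>x\<in>states S d. q0 x * fwd_kernel S d t x y)"

definition score :: "nat \<Rightarrow> nat \<Rightarrow> ((nat \<Rightarrow> nat) \<Rightarrow> real) \<Rightarrow> real \<Rightarrow> (nat \<Rightarrow> nat) \<Rightarrow> (nat \<Rightarrow> nat) \<Rightarrow> real" where
  "score S d q0 t y x = qlaw S d q0 t y / qlaw S d q0 t x"

definition rev_rate :: "nat \<Rightarrow> nat \<Rightarrow> ((nat \<Rightarrow> nat) \<Rightarrow> real) \<Rightarrow> real \<Rightarrow> real \<Rightarrow> (nat \<Rightarrow> nat) \<Rightarrow> (nat \<Rightarrow> nat) \<Rightarrow> real" where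
  "rev_rate S d q0 T t x y = Qunif S d y x * score S d q0 (T - t) y x"

definition rev_cond :: "nat \<Rightarrow> nat \<Rightarrow> ((nat \<Rightarrow> nat) \<Rightarrow> real) \<Rightarrow> real \<Rightarrow> real \<Rightarrow> real \<Rightarrow> (nat \<Rightarrow> nat) \<Rightarrow> (nat \<Rightarrow> nat) \<Rightarrow> real" where
  "rev_cond S d q0 T l t x y =
     transition (states S d) (gen (states S d) (rev_rate S d q0 T)) {l..<T} l t x y"

end

theory Submission
  imports Defs
begin

(* The uniform noising process acts independently on the d coordinates, so its transition kernel
  is the explicit product p_t(x, y) = prod_j ((1 - exp (-t)) / S + exp (-t) [x_j = y_j]). This kernel
  is symmetric and invariant under every shift x |-> x (+)_i c. Because the generator is symmetric,
  the reverse process has the explicit transition law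
    q<-_{t|l}(y | x) = q_{T-t}(y) p_{t-l}(x, y) / q_{T-l}(x),
  which is verified against its Kolmogorov forward equation; solutions of that equation are unique
  by a Gronwall estimate on the squared difference. Averaging s_{T-t}(y (+)_i c, y) against this
  law, the shift invariance of p_{t-l} and Chapman-Kolmogorov turn the sum into
  q_{T-l}(x (+)_i c) / q_{T-l}(x). *)

section \<open>Uniqueness for the Kolmogorov forward equation\<close>

lemma gronwall_vanishing:
  fixes u u' :: "real \<Rightarrow> real"
  assumes "l \<le> b" and "u l = 0" and nonneg: "\<And>s. s \<in> {l..b} \<Longrightarrow> 0 \<le> u s"
    and deriv: "\<And>s. s \<in> {l..b} \<Longrightarrow> (u has_real_derivative u' s) (at s within {l..b})"
    and growth: "\<And>s. s \<in> {l..b} \<Longrightarrow> u' s \<le> C * u s"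
  shows "u b = 0"
proof (cases "l = b")
  case False
  define w where "w s = u s * exp (- C * s)" for s
  define w' where "w' s = (u' s - C * u s) * exp (- C * s)" for s
  have "(w has_real_derivative w' s) (at s within {l..b})" if "s \<in> {l..b}" for s
    unfolding w_def w'_def using deriv[OF that]
    by (auto intro!: derivative_eq_intros simp: algebra_simps)
  then obtain z where z: "z \<in> {l<..<b}" "w b - w l = w' z * (b - l)"
    using mvt_simple[of l b w "\<lambda>s. (*) (w' s)"] \<open>l \<le> b\<close> False
    by (auto simp: has_field_derivative_def)
  have "w' z \<le> 0"
    using growth[of z] z(1) unfolding w'_def by (auto intro: mult_nonpos_nonneg)
  then have "w b \<le> 0"
    using z \<open>l \<le> b\<close> \<open>u l = 0\<close> unfolding w_def by (simp add: mult_nonpos_nonneg)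
  then show ?thesis
    using nonneg[of b] \<open>l \<le> b\<close> unfolding w_def by (simp add: mult_le_0_iff)
qed (use \<open>u l = 0\<close> in simp)

lemma sum_bilinear_le:
  fixes D :: "'a \<Rightarrow> real"
  assumes "finite X" and bound: "\<And>z y. z \<in> X \<Longrightarrow> y \<in> X \<Longrightarrow> \<bar>B z y\<bar> \<le> K"
  shows "(\<Sum>y\<in>X. D y * (\<Sum>z\<in>X. D z * B z y)) \<le> K * card X * (\<Sum>y\<in>X. (D y)\<^sup>2)"
proof (cases "X = {}")
  case False
  then have "0 \<le> K" using bound by (meson all_not_in_conv abs_ge_zero order_trans)
  have "(\<Sum>y\<in>X. D y * (\<Sum>z\<in>X. D z * B z y)) \<le> (\<Sum>y\<in>X. \<Sum>z\<in>X. K * (\<bar>D y\<bar> * \<bar>D z\<bar>))"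
    unfolding sum_distrib_left
  proof (intro sum_mono)
    fix y z assume "y \<in> X" "z \<in> X"
    then have "D y * (D z * B z y) \<le> \<bar>D y\<bar> * \<bar>D z\<bar> * \<bar>B z y\<bar>"
      by (metis abs_ge_self abs_mult mult.assoc)
    also have "\<dots> \<le> \<bar>D y\<bar> * \<bar>D z\<bar> * K"
      using bound[OF \<open>z \<in> X\<close> \<open>y \<in> X\<close>] by (intro mult_left_mono) auto
    finally show "D y * (D z * B z y) \<le> K * (\<bar>D y\<bar> * \<bar>D z\<bar>)" by (simp add: mult_ac)
  qed
  also have "\<dots> = K * (\<Sum>y\<in>X. \<bar>D y\<bar>)\<^sup>2"
    by (simp add: power2_eq_square sum_distrib_left sum_distrib_right mult_ac)
  also have "\<dots> \<le> K * ((\<Sum>y\<in>X. \<bar>D y\<bar>\<^sup>2) * card X)"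
    using \<open>0 \<le> K\<close> by (intro mult_left_mono sum_squared_le_sum_of_squares)
  finally show ?thesis by (simp add: mult_ac)
qed simp

lemma continuous_entries_bounded:
  fixes A :: "real \<Rightarrow> 'a \<Rightarrow> 'a \<Rightarrow> real"
  assumes "finite X" and "\<And>z y. z \<in> X \<Longrightarrow> y \<in> X \<Longrightarrow> continuous_on {a..b} (\<lambda>s. A s z y)"
  obtains K where "\<And>s z y. s \<in> {a..b} \<Longrightarrow> z \<in> X \<Longrightarrow> y \<in> X \<Longrightarrow> \<bar>A s z y\<bar> \<le> K"
proof -
  define F where "F s = (\<Sum>(z, y)\<in>X \<times> X. \<bar>A s z y\<bar>)" for s
  have "continuous_on {a..b} F"
    unfolding F_def by (intro continuous_intros) (auto intro!: continuous_on_rabs assms(2))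
  then have "bounded (F ` {a..b})"
    by (intro compact_imp_bounded compact_continuous_image) auto
  then obtain K where K: "\<And>s. s \<in> {a..b} \<Longrightarrow> \<bar>F s\<bar> \<le> K"
    unfolding bounded_iff by (metis imageI real_norm_def)
  have "\<bar>A s z y\<bar> \<le> K" if "s \<in> {a..b}" "z \<in> X" "y \<in> X" for s z y
  proof -
    have "\<bar>A s z y\<bar> \<le> F s"
      unfolding F_def using that assms(1)
      by (intro member_le_sum[of "(z, y)" _ "\<lambda>(z, y). \<bar>A s z y\<bar>", simplified]) auto
    then show ?thesis using K[OF that(1)] by linarith
  qed
  then show thesis by (rule that)
qed

lemma linear_system_vanishing:
  fixes A :: "real \<Rightarrow> 'a \<Rightarrow> 'a \<Rightarrow> real" and D :: "real \<Rightarrow> 'a \<Rightarrow> real"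
  assumes "finite X" "l \<le> b"
    and bound: "\<And>s z w. s \<in> {l..b} \<Longrightarrow> z \<in> X \<Longrightarrow> w \<in> X \<Longrightarrow> \<bar>A s z w\<bar> \<le> K"
    and deriv: "\<And>s z. s \<in> {l..b} \<Longrightarrow> z \<in> X \<Longrightarrow>
      ((\<lambda>s. D s z) has_real_derivative (\<Sum>w\<in>X. D s w * A s w z)) (at s within {l..b})"
    and init: "\<And>z. z \<in> X \<Longrightarrow> D l z = 0"
    and "y \<in> X"
  shows "D b y = 0"
proof -
  define u where "u s = (\<Sum>z\<in>X. (D s z)\<^sup>2)" for s
  define u' where "u' s = 2 * (\<Sum>z\<in>X. D s z * (\<Sum>w\<in>X. D s w * A s w z))" for s
  have u_deriv: "(u has_real_derivative u' s) (at s within {l..b})" if "s \<in> {l..b}" for s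
  proof -
    have "((\<lambda>s. (D s z)\<^sup>2) has_real_derivative 2 * (D s z * (\<Sum>w\<in>X. D s w * A s w z)))
        (at s within {l..b})" if "z \<in> X" for z
      using DERIV_power[OF deriv[OF \<open>s \<in> {l..b}\<close> that], of 2] by (simp add: mult_ac)
    then show ?thesis unfolding u_def u'_def sum_distrib_left by (rule DERIV_sum)
  qed
  have u_growth: "u' s \<le> 2 * K * card X * u s" if "s \<in> {l..b}" for s
  proof -
    have "(\<Sum>z\<in>X. D s z * (\<Sum>w\<in>X. D s w * A s w z)) \<le> K * card X * u s"
      unfolding u_def by (rule sum_bilinear_le[OF \<open>finite X\<close> bound[OF that]])
    then show ?thesis unfolding u'_def by simp
  qed
  have "u l = 0" using init unfolding u_def by simp
  then have "u b = 0"
    by (rule gronwall_vanishing[OF \<open>l \<le> b\<close> _ _ u_deriv u_growth]) (simp add: u_def sum_nonneg)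
  then show ?thesis
    using \<open>finite X\<close> \<open>y \<in> X\<close> unfolding u_def by (simp add: sum_nonneg_eq_0_iff)
qed

lemma is_transition_unique:
  fixes A :: "real \<Rightarrow> 'a \<Rightarrow> 'a \<Rightarrow> real"
  assumes "finite X" and P1: "is_transition X A I l P1" and P2: "is_transition X A I l P2"
    and I: "I \<subseteq> {l..}" "\<And>b. b \<in> I \<Longrightarrow> {l..b} \<subseteq> I"
    and cont: "\<And>b z y. b \<in> I \<Longrightarrow> z \<in> X \<Longrightarrow> y \<in> X \<Longrightarrow> continuous_on {l..b} (\<lambda>s. A s z y)"
  shows "P1 = P2"
proof (intro ext)
  fix b x y
  show "P1 b x y = P2 b x y"
  proof (cases "b \<in> I \<and> x \<in> X \<and> y \<in> X")
    case False
    then show ?thesis using P1 P2 unfolding is_transition_def by metis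
  next
    case True
    then have "b \<in> I" "x \<in> X" "y \<in> X" by auto
    then have "l \<le> b" "{l..b} \<subseteq> I" using I by auto
    obtain K where K: "\<And>s z w. s \<in> {l..b} \<Longrightarrow> z \<in> X \<Longrightarrow> w \<in> X \<Longrightarrow> \<bar>A s z w\<bar> \<le> K"
      using continuous_entries_bounded[where A = A and a = l and b = b, OF \<open>finite X\<close>]
        cont[OF \<open>b \<in> I\<close>] by blast
    define D where "D s z = P1 s x z - P2 s x z" for s z
    have dD: "((\<lambda>s. D s z) has_real_derivative (\<Sum>w\<in>X. D s w * A s w z)) (at s within {l..b})"
      if "s \<in> {l..b}" "z \<in> X" for s z
    proof -
      have "((\<lambda>s. D s z) has_real_derivative
          (\<Sum>w\<in>X. P1 s x w * A s w z) - (\<Sum>w\<in>X. P2 s x w * A s w z)) (at s within I)"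
        using P1 P2 that \<open>{l..b} \<subseteq> I\<close> \<open>x \<in> X\<close> unfolding is_transition_def D_def
        by (intro derivative_intros) auto
      moreover have "(\<Sum>w\<in>X. P1 s x w * A s w z) - (\<Sum>w\<in>X. P2 s x w * A s w z)
          = (\<Sum>w\<in>X. D s w * A s w z)"
        unfolding D_def by (simp add: left_diff_distrib sum_subtractf)
      ultimately show ?thesis
        using has_field_derivative_subset[OF _ \<open>{l..b} \<subseteq> I\<close>] by simp
    qed
    have D0: "D l z = 0" if "z \<in> X" for z
      using P1 P2 \<open>x \<in> X\<close> that unfolding D_def is_transition_def by simp
    show ?thesis
      using linear_system_vanishing[OF \<open>finite X\<close> \<open>l \<le> b\<close> K dD D0 \<open>y \<in> X\<close>] unfolding D_def by simp
  qed
qed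

lemma transition_eqI:
  fixes A P :: "real \<Rightarrow> 'a \<Rightarrow> 'a \<Rightarrow> real"
  assumes "finite X"
    and I: "l \<in> I" "I \<subseteq> {l..}" "\<And>b. b \<in> I \<Longrightarrow> {l..b} \<subseteq> I"
    and cont: "\<And>b z y. b \<in> I \<Longrightarrow> z \<in> X \<Longrightarrow> y \<in> X \<Longrightarrow> continuous_on {l..b} (\<lambda>s. A s z y)"
    and init: "\<And>x y. x \<in> X \<Longrightarrow> y \<in> X \<Longrightarrow> P l x y = (if x = y then 1 else 0)"
    and forward: "\<And>t x y. t \<in> I \<Longrightarrow> x \<in> X \<Longrightarrow> y \<in> X \<Longrightarrow>
      ((\<lambda>s. P s x y) has_real_derivative (\<Sum>z\<in>X. P t x z * A t z y)) (at t within I)"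
    and "t \<in> I" "x \<in> X" "y \<in> X"
  shows "transition X A I l t x y = P t x y"
proof -
  define P' where "P' t x y = (if t \<in> I \<and> x \<in> X \<and> y \<in> X then P t x y else 0)" for t x y
  have P': "is_transition X A I l P'"
    unfolding is_transition_def
  proof (intro conjI ballI allI impI)
    fix t x y assume "t \<in> I" "x \<in> X" "y \<in> X"
    then have "((\<lambda>s. P' s x y) has_real_derivative (\<Sum>z\<in>X. P t x z * A t z y)) (at t within I)"
      unfolding P'_def by (intro has_field_derivative_transform_within[OF forward, where d = 1]) auto
    then show "((\<lambda>s. P' s x y) has_real_derivative (\<Sum>z\<in>X. P' t x z * A t z y)) (at t within I)"
      using \<open>t \<in> I\<close> \<open>x \<in> X\<close> unfolding P'_def by simp
  qed (use I(1) init in \<open>auto simp: P'_def\<close>)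
  have "transition X A I l = P'"
    unfolding transition_def
  proof (rule the_equality)
    show "P'' = P'" if "is_transition X A I l P''" for P''
      using is_transition_unique[where X = X and A = A and I = I and l = l, OF \<open>finite X\<close> that P' I(2,3) cont]
      by blast
  qed (fact P')
  then show ?thesis
    using \<open>t \<in> I\<close> \<open>x \<in> X\<close> \<open>y \<in> X\<close> unfolding P'_def by simp
qed

lemma gen_time_indep: "gen X (\<lambda>_. Q) t = gen X (\<lambda>_. Q) t'"
  unfolding gen_def by (intro ext) simp

lemma sum_mult_gen:
  assumes "finite X" "y \<in> X"
  shows "(\<Sum>z\<in>X. f z * gen X R s z y) = - f y * (\<Sum>w\<in>X - {y}. R s y w) + (\<Sum>z\<in>X - {y}. f z * R s z y)"
proof -
  have "(\<Sum>z\<in>X - {y}. f z * gen X R s z y) = (\<Sum>z\<in>X - {y}. f z * R s z y)"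
    by (intro sum.cong) (auto simp: gen_def)
  then show ?thesis
    using assms by (simp add: sum.remove gen_def)
qed

(* With u = q_{T-s} and v = p_{s-l}(x, _) the left side is q_{T-l}(x) times the time derivative of
  the candidate reverse kernel, and the right side is the forward-equation term for the reverse rates. *)
lemma reversal_generator_identity:
  fixes Q :: "'a \<Rightarrow> 'a \<Rightarrow> real" and u v :: "'a \<Rightarrow> real"
  assumes "finite X" "y \<in> X"
    and sym: "\<And>z w. z \<in> X \<Longrightarrow> w \<in> X \<Longrightarrow> Q z w = Q w z"
    and pos: "\<And>z. z \<in> X \<Longrightarrow> u z > 0"
  shows "u y * (\<Sum>z\<in>X. v z * gen X (\<lambda>_. Q) s z y) - v y * (\<Sum>z\<in>X. u z * gen X (\<lambda>_. Q) s z y)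
    = (\<Sum>z\<in>X. u z * v z * gen X (\<lambda>_ z w. Q w z * u w / u z) s z y)"
proof -
  have "(\<Sum>z\<in>X - {y}. u z * v z * (Q y z * u y / u z)) = u y * (\<Sum>z\<in>X - {y}. v z * Q z y)"
    unfolding sum_distrib_left
  proof (intro sum.cong refl)
    fix z assume "z \<in> X - {y}"
    then have "u z \<noteq> 0" "Q y z = Q z y" using pos sym assms(2) by (auto simp: less_imp_neq[symmetric])
    then show "u z * v z * (Q y z * u y / u z) = u y * (v z * Q z y)" by (simp add: field_simps)
  qed
  moreover have "u y * v y * (\<Sum>w\<in>X - {y}. Q w y * u w / u y) = v y * (\<Sum>z\<in>X - {y}. u z * Q z y)"
    using pos[OF assms(2)] by (simp add: sum_divide_distrib[symmetric] mult_ac)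
  ultimately show ?thesis
    unfolding sum_mult_gen[OF assms(1,2)] by (simp add: algebra_simps)
qed

section \<open>The state space and the uniform generator\<close>

lemma finite_states [simp]: "finite (states S d)"
  unfolding states_def by (auto intro: finite_PiE)

lemma states_coord_in: "x \<in> states S d \<Longrightarrow> j \<in> {1..d} \<Longrightarrow> x j \<in> {1..S}"
  unfolding states_def by auto

lemma states_eqI:
  "x \<in> states S d \<Longrightarrow> y \<in> states S d \<Longrightarrow> (\<And>j. j \<in> {1..d} \<Longrightarrow> x j = y j) \<Longrightarrow> x = y"
  unfolding states_def by (rule PiE_ext)

lemma fun_upd_in_states:
  "y \<in> states S d \<Longrightarrow> i \<in> {1..d} \<Longrightarrow> a \<in> {1..S} \<Longrightarrow> y(i := a) \<in> states S d"
  unfolding states_def by (auto simp: PiE_iff extensional_def)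

definition coord_line :: "nat \<Rightarrow> nat \<Rightarrow> nat \<Rightarrow> (nat \<Rightarrow> nat) \<Rightarrow> (nat \<Rightarrow> nat) set" where
  "coord_line S d i y = {z \<in> states S d. \<forall>j\<in>{1..d} - {i}. z j = y j}"

lemma coord_line_eq_image:
  assumes "y \<in> states S d" "i \<in> {1..d}"
  shows "coord_line S d i y = (\<lambda>a. y(i := a)) ` {1..S}"
proof (intro equalityI subsetI)
  fix z assume z: "z \<in> coord_line S d i y"
  then have "z \<in> states S d" unfolding coord_line_def by simp
  then have "z i \<in> {1..S}" using assms(2) by (rule states_coord_in)
  moreover have "z = y(i := z i)"
    using z \<open>z i \<in> {1..S}\<close> assms unfolding coord_line_def
    by (intro states_eqI fun_upd_in_states) auto
  ultimately show "z \<in> (\<lambda>a. y(i := a)) ` {1..S}" by blast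
qed (use assms in \<open>auto simp: coord_line_def intro!: fun_upd_in_states split: if_splits\<close>)

lemma sum_coord_line:
  assumes "y \<in> states S d" "i \<in> {1..d}"
  shows "(\<Sum>z\<in>coord_line S d i y. f z) = (\<Sum>a\<in>{1..S}. f (y(i := a)))"
  unfolding coord_line_eq_image[OF assms]
  by (subst sum.reindex) (auto simp: inj_on_def dest: fun_cong[where x = i])

lemma card_coord_line: "y \<in> states S d \<Longrightarrow> i \<in> {1..d} \<Longrightarrow> card (coord_line S d i y) = S"
  unfolding coord_line_eq_image by (subst card_image) (auto simp: inj_on_def dest: fun_cong[where x = i])

lemma Qunif_commute: "Qunif S d x y = Qunif S d y x"
  unfolding Qunif_def hamming_def by (metis (no_types, lifting) Collect_cong)

lemma Qunif_eq_sum_coord_line: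
  assumes "z \<in> states S d" "y \<in> states S d" "z \<noteq> y"
  shows "Qunif S d z y = (\<Sum>i\<in>{1..d}. if z \<in> coord_line S d i y then 1 / real S else 0)"
proof -
  define D where "D = {i \<in> {1..d}. z i \<noteq> y i}"
  have "D \<noteq> {}" using states_eqI[OF assms(1,2)] assms(3) unfolding D_def by blast
  then have "z \<in> coord_line S d i y \<longleftrightarrow> D = {i}" if "i \<in> {1..d}" for i
    using assms(1) that unfolding coord_line_def D_def by blast
  then have "(\<Sum>i\<in>{1..d}. if z \<in> coord_line S d i y then 1 / real S else 0)
      = (\<Sum>i\<in>{1..d}. if D = {i} then 1 / real S else 0)"
    by (intro sum.cong) auto
  also have "\<dots> = (if card D = 1 then 1 / real S else 0)"
  proof (cases "card D = 1")
    case True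
    then obtain i0 where "D = {i0}" by (rule card_1_singletonE)
    moreover have "i0 \<in> {1..d}" using \<open>D = {i0}\<close> unfolding D_def by blast
    ultimately show ?thesis by (simp add: eq_commute[of "{i0}"])
  next
    case False
    then have "D \<noteq> {i}" for i by auto
    then show ?thesis using False by simp
  qed
  finally show ?thesis unfolding Qunif_def hamming_def D_def by simp
qed

lemma gen_unif_eq:
  assumes "z \<in> states S d" "y \<in> states S d" "S \<ge> 1"
  shows "gen (states S d) (\<lambda>_. Qunif S d) t z y
    = (\<Sum>i\<in>{1..d}. if z \<in> coord_line S d i y then 1 / real S else 0) - (if z = y then real d else 0)"
proof (cases "z = y")
  case True
  have line: "y \<in> coord_line S d i y" "coord_line S d i y \<subseteq> states S d" for i
    using assms(2) unfolding coord_line_def by auto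
  have "(\<Sum>w\<in>states S d - {y}. Qunif S d y w)
      = (\<Sum>w\<in>states S d - {y}. \<Sum>i\<in>{1..d}. if w \<in> coord_line S d i y then 1 / real S else 0)"
    using assms by (intro sum.cong refl) (auto simp: Qunif_commute[of S d y] Qunif_eq_sum_coord_line)
  also have "\<dots> = (\<Sum>i\<in>{1..d}. card (coord_line S d i y \<inter> (states S d - {y})) / real S)"
    by (subst sum.swap) (simp add: sum.If_cases Int_commute)
  also have "\<dots> = (\<Sum>i\<in>{1..d}. (real S - 1) / real S)"
  proof (intro sum.cong refl)
    fix i assume "i \<in> {1..d}"
    have "coord_line S d i y \<inter> (states S d - {y}) = coord_line S d i y - {y}" using line(2) by blast
    then have "card (coord_line S d i y \<inter> (states S d - {y})) = S - 1"
      using card_coord_line[OF assms(2) \<open>i \<in> {1..d}\<close>] line(1) by simp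
    then show "card (coord_line S d i y \<inter> (states S d - {y})) / real S = (real S - 1) / real S"
      using assms(3) by simp
  qed
  finally show ?thesis
    using True assms line(1) unfolding gen_def by (simp add: field_simps)
qed (use assms Qunif_eq_sum_coord_line in \<open>simp add: gen_def\<close>)

section \<open>The forward kernel and the marginals\<close>

definition coord_kernel :: "nat \<Rightarrow> real \<Rightarrow> nat \<Rightarrow> nat \<Rightarrow> real" where
  "coord_kernel S t a b = (1 - exp (- t)) / real S + (if a = b then exp (- t) else 0)"

definition unif_kernel :: "nat \<Rightarrow> nat \<Rightarrow> real \<Rightarrow> (nat \<Rightarrow> nat) \<Rightarrow> (nat \<Rightarrow> nat) \<Rightarrow> real" where
  "unif_kernel S d t x y = (\<Prod>j\<in>{1..d}. coord_kernel S t (x j) (y j))"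

lemma sum_coord_kernel: "a \<in> {1..S} \<Longrightarrow> (\<Sum>b\<in>{1..S}. coord_kernel S t a b) = 1"
  unfolding coord_kernel_def by (simp add: sum.distrib)

lemma coord_kernel_chapman_kolmogorov:
  assumes "a \<in> {1..S}" "c \<in> {1..S}"
  shows "(\<Sum>b\<in>{1..S}. coord_kernel S u a b * coord_kernel S v b c) = coord_kernel S (u + v) a c"
proof -
  define p where "p = (1 - exp (- u)) / real S"
  define q where "q = (1 - exp (- v)) / real S"
  have "(\<Sum>b\<in>{1..S}. coord_kernel S u a b * coord_kernel S v b c)
      = (\<Sum>b\<in>{1..S}. p * q + (if b = c then p * exp (- v) else 0) + (if b = a then exp (- u) * q else 0)
          + (if b = a then if a = c then exp (- u) * exp (- v) else 0 else 0))"
    unfolding coord_kernel_def p_def[symmetric] q_def[symmetric] by (intro sum.cong) (auto simp: algebra_simps)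
  also have "\<dots> = real S * p * q + p * exp (- v) + exp (- u) * q + (if a = c then exp (- u) * exp (- v) else 0)"
    using assms by (simp add: sum.distrib)
  also have "\<dots> = coord_kernel S (u + v) a c"
    using assms unfolding coord_kernel_def p_def q_def by (simp add: field_simps mult_exp_exp)
  finally show ?thesis .
qed

lemma coord_kernel_deriv:
  "((\<lambda>t. coord_kernel S t a b) has_real_derivative 1 / real S - coord_kernel S t a b) (at t)"
  unfolding coord_kernel_def by (cases "S = 0") (auto intro!: derivative_eq_intros simp: field_simps)

lemma unif_kernel_chapman_kolmogorov:
  assumes "x \<in> states S d" "y \<in> states S d"
  shows "(\<Sum>z\<in>states S d. unif_kernel S d u x z * unif_kernel S d v z y) = unif_kernel S d (u + v) x y"
proof -
  have "(\<Sum>z\<in>states S d. unif_kernel S d u x z * unif_kernel S d v z y)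
      = (\<Sum>z\<in>{1..d} \<rightarrow>\<^sub>E {1..S}. \<Prod>j\<in>{1..d}. coord_kernel S u (x j) (z j) * coord_kernel S v (z j) (y j))"
    unfolding states_def unif_kernel_def by (simp add: prod.distrib)
  also have "\<dots> = (\<Prod>j\<in>{1..d}. \<Sum>b\<in>{1..S}. coord_kernel S u (x j) b * coord_kernel S v b (y j))"
    by (rule prod_sum_PiE[symmetric]) auto
  also have "\<dots> = unif_kernel S d (u + v) x y"
    unfolding unif_kernel_def using assms
    by (intro prod.cong refl coord_kernel_chapman_kolmogorov) (auto simp: states_def)
  finally show ?thesis .
qed

lemma unif_kernel_commute: "unif_kernel S d t x y = unif_kernel S d t y x"
  unfolding unif_kernel_def coord_kernel_def by (intro prod.cong) auto

lemma unif_kernel_0: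
  assumes "x \<in> states S d" "y \<in> states S d"
  shows "unif_kernel S d 0 x y = (if x = y then 1 else 0)"
proof (cases "x = y")
  case False
  then obtain j where "j \<in> {1..d}" "x j \<noteq> y j" using states_eqI[OF assms] by blast
  then show ?thesis unfolding unif_kernel_def coord_kernel_def by (auto intro!: prod_zero)
qed (simp add: unif_kernel_def coord_kernel_def)

lemma unif_kernel_pos: "S \<ge> 1 \<Longrightarrow> t > 0 \<Longrightarrow> unif_kernel S d t x y > 0"
  unfolding unif_kernel_def coord_kernel_def by (intro prod_pos) (auto intro: add_pos_nonneg)

lemma unif_kernel_split:
  "i \<in> {1..d} \<Longrightarrow>
    unif_kernel S d t x y = coord_kernel S t (x i) (y i) * (\<Prod>j\<in>{1..d} - {i}. coord_kernel S t (x j) (y j))"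
  unfolding unif_kernel_def by (rule prod.remove) auto

lemma unif_kernel_deriv:
  "((\<lambda>t. unif_kernel S d t x y) has_real_derivative
     (\<Sum>i\<in>{1..d}. (1 / real S - coord_kernel S t (x i) (y i)) *
        (\<Prod>j\<in>{1..d} - {i}. coord_kernel S t (x j) (y j)))) (at t)"
  unfolding unif_kernel_def by (intro has_field_derivative_prod coord_kernel_deriv)

lemma unif_kernel_mult_generator:
  assumes x: "x \<in> states S d" and y: "y \<in> states S d" and "S \<ge> 1"
  shows "(\<Sum>z\<in>states S d. unif_kernel S d t x z * gen (states S d) (\<lambda>_. Qunif S d) t z y)
    = (\<Sum>i\<in>{1..d}. (1 / real S - coord_kernel S t (x i) (y i)) *
        (\<Prod>j\<in>{1..d} - {i}. coord_kernel S t (x j) (y j)))"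
proof -
  define R where "R i = (\<Prod>j\<in>{1..d} - {i}. coord_kernel S t (x j) (y j))" for i
  have line_sum: "(\<Sum>z\<in>coord_line S d i y. unif_kernel S d t x z) = R i" if i: "i \<in> {1..d}" for i
  proof -
    have "unif_kernel S d t x (y(i := a)) = coord_kernel S t (x i) a * R i" for a
      unfolding unif_kernel_split[OF i] R_def by (auto intro: prod.cong)
    then have "(\<Sum>z\<in>coord_line S d i y. unif_kernel S d t x z) = (\<Sum>a\<in>{1..S}. coord_kernel S t (x i) a) * R i"
      by (simp add: sum_coord_line[OF y i] sum_distrib_right)
    then show ?thesis
      using sum_coord_kernel[OF states_coord_in[OF x i], of t] by simp
  qed
  have line_states: "coord_line S d i y \<subseteq> states S d" for i
    unfolding coord_line_def by blast
  have "unif_kernel S d t x z * gen (states S d) (\<lambda>_. Qunif S d) t z y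
      = (\<Sum>i\<in>{1..d}. if z \<in> coord_line S d i y then unif_kernel S d t x z / real S else 0)
        - (if z = y then real d * unif_kernel S d t x y else 0)" if "z \<in> states S d" for z
    using assms that by (auto simp: gen_unif_eq right_diff_distrib sum_distrib_left intro!: sum.cong)
  then have "(\<Sum>z\<in>states S d. unif_kernel S d t x z * gen (states S d) (\<lambda>_. Qunif S d) t z y)
      = (\<Sum>i\<in>{1..d}. \<Sum>z\<in>states S d. if z \<in> coord_line S d i y then unif_kernel S d t x z / real S else 0)
        - real d * unif_kernel S d t x y"
    by (simp add: sum_subtractf y) (rule sum.swap)
  also have "\<dots> = (\<Sum>i\<in>{1..d}. R i / real S) - (\<Sum>i\<in>{1..d}. coord_kernel S t (x i) (y i) * R i)"
  proof -
    have "(\<Sum>z\<in>states S d. if z \<in> coord_line S d i y then unif_kernel S d t x z / real S else 0) = R i / real S"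
      if "i \<in> {1..d}" for i
      using line_sum[OF that] line_states[of i]
      by (simp add: sum.inter_restrict[symmetric] Int_absorb1 Int_absorb2 sum_divide_distrib[symmetric])
    moreover have "(\<Sum>i\<in>{1..d}. coord_kernel S t (x i) (y i) * R i) = (\<Sum>i\<in>{1..d}. unif_kernel S d t x y)"
      by (intro sum.cong refl) (simp add: unif_kernel_split R_def)
    ultimately show ?thesis by simp
  qed
  finally show ?thesis unfolding R_def by (simp add: left_diff_distrib sum_subtractf sum_divide_distrib)
qed

lemma unif_kernel_kolmogorov_forward:
  assumes "S \<ge> 1" "x \<in> states S d" "y \<in> states S d"
  shows "((\<lambda>t. unif_kernel S d t x y) has_real_derivative
    (\<Sum>z\<in>states S d. unif_kernel S d t x z * gen (states S d) (\<lambda>_. Qunif S d) t z y)) (at t)"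
  by (subst unif_kernel_mult_generator[OF assms(2,3,1)]) (rule unif_kernel_deriv)

lemma fwd_kernel_eq_unif_kernel:
  assumes "S \<ge> 1" "t \<ge> 0" "x \<in> states S d" "y \<in> states S d"
  shows "fwd_kernel S d t x y = unif_kernel S d t x y"
  unfolding fwd_kernel_def
proof (rule transition_eqI)
  fix t x y assume "x \<in> states S d" "y \<in> states S d"
  show "((\<lambda>s. unif_kernel S d s x y) has_real_derivative
      (\<Sum>z\<in>states S d. unif_kernel S d t x z * gen (states S d) (\<lambda>_. Qunif S d) t z y)) (at t within {0..})"
    by (rule has_field_derivative_at_within[OF unif_kernel_kolmogorov_forward[OF \<open>S \<ge> 1\<close> \<open>x \<in> states S d\<close> \<open>y \<in> states S d\<close>]])
qed (use assms in \<open>auto simp: unif_kernel_0 gen_def\<close>)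

definition unif_marginal :: "nat \<Rightarrow> nat \<Rightarrow> ((nat \<Rightarrow> nat) \<Rightarrow> real) \<Rightarrow> real \<Rightarrow> (nat \<Rightarrow> nat) \<Rightarrow> real" where
  "unif_marginal S d q0 t y = (\<Sum>x\<in>states S d. q0 x * unif_kernel S d t x y)"

lemma qlaw_eq_unif_marginal:
  "S \<ge> 1 \<Longrightarrow> t \<ge> 0 \<Longrightarrow> y \<in> states S d \<Longrightarrow> qlaw S d q0 t y = unif_marginal S d q0 t y"
  unfolding qlaw_def unif_marginal_def by (simp add: fwd_kernel_eq_unif_kernel)

lemma score_eq_unif_marginal:
  "S \<ge> 1 \<Longrightarrow> t \<ge> 0 \<Longrightarrow> x \<in> states S d \<Longrightarrow> y \<in> states S d \<Longrightarrow>
    score S d q0 t y x = unif_marginal S d q0 t y / unif_marginal S d q0 t x"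
  unfolding score_def by (simp add: qlaw_eq_unif_marginal)

lemma unif_marginal_pos:
  assumes "S \<ge> 1" "t > 0" "\<forall>x\<in>states S d. q0 x \<ge> 0" "(\<Sum>x\<in>states S d. q0 x) = 1"
  shows "unif_marginal S d q0 t y > 0"
proof -
  obtain x0 where "x0 \<in> states S d" "q0 x0 > 0"
    using assms(3,4) sum_nonneg_eq_0_iff[of "states S d" q0] by force
  then show ?thesis
    unfolding unif_marginal_def using assms(3)
    by (intro sum_pos2[of _ x0])
      (auto intro!: mult_pos_pos mult_nonneg_nonneg unif_kernel_pos[OF assms(1,2)] less_imp_le[OF unif_kernel_pos[OF assms(1,2)]])
qed

lemma unif_marginal_chapman_kolmogorov:
  assumes "y \<in> states S d"
  shows "(\<Sum>z\<in>states S d. unif_marginal S d q0 u z * unif_kernel S d v z y) = unif_marginal S d q0 (u + v) y"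
  unfolding unif_marginal_def sum_distrib_right
  using assms by (subst sum.swap) (simp add: mult.assoc sum_distrib_left[symmetric] unif_kernel_chapman_kolmogorov)

lemma unif_marginal_deriv:
  assumes "S \<ge> 1" "y \<in> states S d"
  shows "((\<lambda>t. unif_marginal S d q0 t y) has_real_derivative
    (\<Sum>z\<in>states S d. unif_marginal S d q0 t z * gen (states S d) (\<lambda>_. Qunif S d) t z y)) (at t)"
proof -
  have "((\<lambda>t. unif_marginal S d q0 t y) has_real_derivative
      (\<Sum>x\<in>states S d. q0 x * (\<Sum>z\<in>states S d. unif_kernel S d t x z * gen (states S d) (\<lambda>_. Qunif S d) t z y))) (at t)"
    unfolding unif_marginal_def using assms by (intro DERIV_sum DERIV_cmult unif_kernel_kolmogorov_forward)
  then show ?thesis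
    unfolding unif_marginal_def sum_distrib_left sum_distrib_right
    by (subst (asm) sum.swap) (simp add: mult.assoc)
qed

lemma unif_marginal_continuous: "continuous_on A (\<lambda>s. unif_marginal S d q0 (T - s) y)"
proof -
  have "continuous_on UNIV (\<lambda>t. unif_kernel S d t x y)" for x
    by (intro continuous_at_imp_continuous_on ballI DERIV_isCont[OF unif_kernel_deriv])
  then have "continuous_on UNIV (\<lambda>t. unif_marginal S d q0 t y)"
    unfolding unif_marginal_def by (intro continuous_intros)
  then show ?thesis
    by (rule continuous_on_compose2[where f = "\<lambda>s. T - s"]) (auto intro: continuous_intros)
qed

section \<open>The reverse process\<close>

lemma gen_rev_rate_eq:
  assumes "S \<ge> 1" "s < T" "z \<in> states S d" "y \<in> states S d"
  shows "gen (states S d) (rev_rate S d q0 T) s z y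
    = gen (states S d) (\<lambda>_ z w. Qunif S d w z * unif_marginal S d q0 (T - s) w / unif_marginal S d q0 (T - s) z) s z y"
  unfolding gen_def rev_rate_def using assms by (auto simp: score_eq_unif_marginal intro!: sum.cong)

lemma gen_rev_rate_continuous:
  assumes "S \<ge> 1" "b < T" "z \<in> states S d" "y \<in> states S d"
    and "\<forall>x\<in>states S d. q0 x \<ge> 0" "(\<Sum>x\<in>states S d. q0 x) = 1"
  shows "continuous_on {l..b} (\<lambda>s. gen (states S d) (rev_rate S d q0 T) s z y)"
proof -
  define m where "m s w = unif_marginal S d q0 (T - s) w" for s w
  have m_cont: "continuous_on {l..b} (\<lambda>s. m s w)" for w
    unfolding m_def by (rule unif_marginal_continuous)
  have m_nonzero: "\<forall>s\<in>{l..b}. m s w \<noteq> 0" for w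
    using unif_marginal_pos[OF assms(1) _ assms(5,6)] \<open>b < T\<close> unfolding m_def
    by (auto simp: less_imp_neq[symmetric])
  have "continuous_on {l..b} (\<lambda>s. gen (states S d) (\<lambda>_ z w. Qunif S d w z * m s w / m s z) s z y)"
  proof (cases "z = y")
    case True
    then show ?thesis
      unfolding gen_def by (simp, intro continuous_on_minus continuous_on_sum continuous_on_divide
          continuous_on_mult continuous_on_const m_cont m_nonzero)
  next
    case False
    then show ?thesis
      unfolding gen_def by (simp, intro continuous_on_divide continuous_on_mult continuous_on_const m_cont m_nonzero)
  qed
  moreover have "gen (states S d) (rev_rate S d q0 T) s z y
      = gen (states S d) (\<lambda>_ z w. Qunif S d w z * m s w / m s z) s z y" if "s \<in> {l..b}" for s
    unfolding m_def using that assms by (intro gen_rev_rate_eq) auto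
  ultimately show ?thesis by (subst continuous_on_cong[OF refl])
qed

definition unif_rev_kernel ::
  "nat \<Rightarrow> nat \<Rightarrow> ((nat \<Rightarrow> nat) \<Rightarrow> real) \<Rightarrow> real \<Rightarrow> real \<Rightarrow> real \<Rightarrow> (nat \<Rightarrow> nat) \<Rightarrow> (nat \<Rightarrow> nat) \<Rightarrow> real"
where
  "unif_rev_kernel S d q0 T l s x y =
     unif_marginal S d q0 (T - s) y * unif_kernel S d (s - l) x y / unif_marginal S d q0 (T - l) x"

lemma unif_rev_kernel_deriv:
  assumes S: "S \<ge> 1" and q0: "\<forall>x\<in>states S d. q0 x \<ge> 0" "(\<Sum>x\<in>states S d. q0 x) = 1"
    and "s < T" and x: "x \<in> states S d" and y: "y \<in> states S d"
  shows "((\<lambda>s. unif_rev_kernel S d q0 T l s x y) has_real_derivative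
    (\<Sum>z\<in>states S d. unif_rev_kernel S d q0 T l s x z * gen (states S d) (rev_rate S d q0 T) s z y)) (at s)"
proof -
  define G where "G = gen (states S d) (\<lambda>_. Qunif S d) s"
  define u where "u z = unif_marginal S d q0 (T - s) z" for z
  define v where "v z = unif_kernel S d (s - l) x z" for z
  define c where "c = unif_marginal S d q0 (T - l) x"
  have dT: "((\<lambda>s. T - s) has_real_derivative -1) (at s)" and dl: "((\<lambda>s. s - l) has_real_derivative 1) (at s)"
    by (auto intro!: derivative_eq_intros)
  have du: "((\<lambda>s. unif_marginal S d q0 (T - s) y) has_real_derivative - (\<Sum>z\<in>states S d. u z * G z y)) (at s)"
    using DERIV_chain2[OF unif_marginal_deriv[OF S y, of q0] dT]
    unfolding u_def G_def by (simp add: gen_time_indep[of _ _ "T - s" s])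
  have dv: "((\<lambda>s. unif_kernel S d (s - l) x y) has_real_derivative (\<Sum>z\<in>states S d. v z * G z y)) (at s)"
    using DERIV_chain2[OF unif_kernel_kolmogorov_forward[OF S x y] dl]
    unfolding v_def G_def by (simp add: gen_time_indep[of _ _ "s - l" s])
  have "- (\<Sum>z\<in>states S d. u z * G z y) * v y + (\<Sum>z\<in>states S d. v z * G z y) * u y
      = u y * (\<Sum>z\<in>states S d. v z * G z y) - v y * (\<Sum>z\<in>states S d. u z * G z y)"
    by (simp add: algebra_simps)
  then have "((\<lambda>s. unif_rev_kernel S d q0 T l s x y) has_real_derivative
      (u y * (\<Sum>z\<in>states S d. v z * G z y) - v y * (\<Sum>z\<in>states S d. u z * G z y)) / c) (at s)"
    using DERIV_cdivide[OF DERIV_mult[OF du dv], of c]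
    unfolding unif_rev_kernel_def u_def v_def c_def by (simp add: ac_simps)
  also have "u y * (\<Sum>z\<in>states S d. v z * G z y) - v y * (\<Sum>z\<in>states S d. u z * G z y)
      = (\<Sum>z\<in>states S d. u z * v z * gen (states S d) (\<lambda>_ z w. Qunif S d w z * u w / u z) s z y)"
    unfolding G_def using unif_marginal_pos[OF S _ q0] \<open>s < T\<close> y
    by (intro reversal_generator_identity) (auto simp: u_def Qunif_commute)
  also have "\<dots> / c
      = (\<Sum>z\<in>states S d. unif_rev_kernel S d q0 T l s x z * gen (states S d) (rev_rate S d q0 T) s z y)"
    unfolding sum_divide_distrib
  proof (intro sum.cong refl)
    fix z assume z: "z \<in> states S d"
    show "u z * v z * gen (states S d) (\<lambda>_ z w. Qunif S d w z * u w / u z) s z y / c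
        = unif_rev_kernel S d q0 T l s x z * gen (states S d) (rev_rate S d q0 T) s z y"
      unfolding gen_rev_rate_eq[OF S \<open>s < T\<close> z y] unif_rev_kernel_def u_def v_def c_def by simp
  qed
  finally show ?thesis .
qed

lemma rev_cond_eq:
  assumes S: "S \<ge> 1" and q0: "\<forall>x\<in>states S d. q0 x \<ge> 0" "(\<Sum>x\<in>states S d. q0 x) = 1"
    and "l \<le> s" "s < T" "x \<in> states S d" "y \<in> states S d"
  shows "rev_cond S d q0 T l s x y = unif_rev_kernel S d q0 T l s x y"
  unfolding rev_cond_def
proof (rule transition_eqI)
  fix s x y assume "s \<in> {l..<T}" "x \<in> states S d" "y \<in> states S d"
  then show "((\<lambda>s. unif_rev_kernel S d q0 T l s x y) has_real_derivative
      (\<Sum>z\<in>states S d. unif_rev_kernel S d q0 T l s x z * gen (states S d) (rev_rate S d q0 T) s z y))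
      (at s within {l..<T})"
    by (intro has_field_derivative_at_within[OF unif_rev_kernel_deriv[OF S q0]]) auto
next
  fix x y assume "x \<in> states S d" "y \<in> states S d"
  then show "unif_rev_kernel S d q0 T l l x y = (if x = y then 1 else 0)"
    using unif_marginal_pos[OF S _ q0, of "T - l" x] assms(4,5)
    by (cases "x = y") (simp_all add: unif_rev_kernel_def unif_kernel_0)
qed (use assms gen_rev_rate_continuous in auto)

section \<open>Shift invariance and the martingale identity\<close>

definition cyclic_shift :: "nat \<Rightarrow> nat \<Rightarrow> nat \<Rightarrow> nat" where
  "cyclic_shift S c a = (if (a + c) mod S = 0 then S else (a + c) mod S)"

lemma oplus_eq_fun_upd: "oplus S x i c = x(i := cyclic_shift S c (x i))"
  unfolding oplus_def cyclic_shift_def ..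

lemma bij_betw_cyclic_shift:
  assumes "S \<ge> 1"
  shows "bij_betw (cyclic_shift S c) {1..S} {1..S}"
proof -
  have "cyclic_shift S c ` {1..S} \<subseteq> {1..S}"
    using assms unfolding cyclic_shift_def by (auto simp: Suc_le_eq)
  moreover have "inj_on (cyclic_shift S c) {1..S}"
  proof (rule inj_onI)
    fix a b assume a: "a \<in> {1..S}" and b: "b \<in> {1..S}" and "cyclic_shift S c a = cyclic_shift S c b"
    then have "cyclic_shift S c a mod S = cyclic_shift S c b mod S" by simp
    then have "(a + c) mod S = (b + c) mod S" unfolding cyclic_shift_def by (simp split: if_splits)
    then have "a mod S = b mod S" using nat_mod_eq_iff by auto
    moreover have "r mod S = (if r = S then 0 else r)" if "r \<in> {1..S}" for r
      using that by auto
    ultimately show "a = b" using a b by (auto split: if_splits)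
  qed
  ultimately show ?thesis
    unfolding bij_betw_def by (simp add: endo_inj_surj)
qed

lemma bij_betw_coord_map:
  assumes f: "bij_betw f {1..S} {1..S}" and i: "i \<in> {1..d}"
  shows "bij_betw (\<lambda>x. x(i := f (x i))) (states S d) (states S d)"
proof -
  have "(\<lambda>x. x(i := f (x i))) ` states S d \<subseteq> states S d"
    using bij_betwE[OF f] states_coord_in i by (auto intro!: fun_upd_in_states)
  moreover have "inj_on (\<lambda>x. x(i := f (x i))) (states S d)"
  proof (rule inj_onI)
    fix x y assume x: "x \<in> states S d" and y: "y \<in> states S d" and eq: "x(i := f (x i)) = y(i := f (y i))"
    then have "f (x i) = f (y i)" by (metis fun_upd_same)
    then have "x i = y i"
      using bij_betw_imp_inj_on[OF f] states_coord_in[OF x i] states_coord_in[OF y i] by (auto dest: inj_onD)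
    show "x = y"
    proof
      fix j show "x j = y j"
        using eq \<open>x i = y i\<close> by (cases "j = i") (auto dest: fun_cong[where x = j])
    qed
  qed
  ultimately show ?thesis
    unfolding bij_betw_def by (simp add: endo_inj_surj)
qed

lemma unif_kernel_coord_map:
  assumes "inj_on f {1..S}" "x \<in> states S d" "y \<in> states S d" "i \<in> {1..d}"
  shows "unif_kernel S d t (x(i := f (x i))) (y(i := f (y i))) = unif_kernel S d t x y"
proof -
  have "f (x i) = f (y i) \<longleftrightarrow> x i = y i"
    using assms(1) states_coord_in[OF assms(2,4)] states_coord_in[OF assms(3,4)] by (auto dest: inj_onD)
  then show ?thesis unfolding unif_kernel_def coord_kernel_def by (intro prod.cong) auto
qed

lemma bij_betw_oplus:
  "S \<ge> 1 \<Longrightarrow> i \<in> {1..d} \<Longrightarrow> bij_betw (\<lambda>x. oplus S x i c) (states S d) (states S d)"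
  unfolding oplus_eq_fun_upd by (intro bij_betw_coord_map bij_betw_cyclic_shift)

lemma unif_kernel_oplus:
  assumes "S \<ge> 1" "i \<in> {1..d}" "x \<in> states S d" "y \<in> states S d"
  shows "unif_kernel S d t (oplus S x i c) (oplus S y i c) = unif_kernel S d t x y"
  unfolding oplus_eq_fun_upd
  using unif_kernel_coord_map[OF bij_betw_imp_inj_on[OF bij_betw_cyclic_shift[OF assms(1)]] assms(3,4,2)] .

lemma rev_cond_score_martingale:
  assumes S: "S \<ge> 1" and q0: "\<forall>x\<in>states S d. q0 x \<ge> 0" "(\<Sum>x\<in>states S d. q0 x) = 1"
    and "l \<le> t" "t < T" and x: "x \<in> states S d"
    and \<sigma>: "bij_betw \<sigma> (states S d) (states S d)"
    and \<sigma>_kernel: "\<And>u x y. x \<in> states S d \<Longrightarrow> y \<in> states S d \<Longrightarrow>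
      unif_kernel S d u (\<sigma> x) (\<sigma> y) = unif_kernel S d u x y"
  shows "(\<Sum>y\<in>states S d. rev_cond S d q0 T l t x y * score S d q0 (T - t) (\<sigma> y) y)
    = score S d q0 (T - l) (\<sigma> x) x"
proof -
  let ?m = "unif_marginal S d q0"
  have \<sigma>x: "\<sigma> x \<in> states S d" using bij_betwE[OF \<sigma>] x by blast
  have "(\<Sum>y\<in>states S d. rev_cond S d q0 T l t x y * score S d q0 (T - t) (\<sigma> y) y)
      = (\<Sum>y\<in>states S d. ?m (T - t) (\<sigma> y) * unif_kernel S d (t - l) (\<sigma> x) (\<sigma> y)) / ?m (T - l) x"
    unfolding sum_divide_distrib
  proof (intro sum.cong refl)
    fix y assume y: "y \<in> states S d"
    have "?m (T - t) y > 0" using unif_marginal_pos[OF S _ q0] \<open>t < T\<close> by simp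
    then show "rev_cond S d q0 T l t x y * score S d q0 (T - t) (\<sigma> y) y
        = ?m (T - t) (\<sigma> y) * unif_kernel S d (t - l) (\<sigma> x) (\<sigma> y) / ?m (T - l) x"
      using assms y bij_betwE[OF \<sigma>]
      by (simp add: rev_cond_eq unif_rev_kernel_def score_eq_unif_marginal \<sigma>_kernel)
  qed
  also have "(\<Sum>y\<in>states S d. ?m (T - t) (\<sigma> y) * unif_kernel S d (t - l) (\<sigma> x) (\<sigma> y))
      = (\<Sum>y\<in>states S d. ?m (T - t) y * unif_kernel S d (t - l) y (\<sigma> x))"
    using sum.reindex_bij_betw[OF \<sigma>, of "\<lambda>y. ?m (T - t) y * unif_kernel S d (t - l) (\<sigma> x) y"]
    by (simp add: unif_kernel_commute)
  also have "\<dots> = ?m (T - l) (\<sigma> x)"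
    using unif_marginal_chapman_kolmogorov[OF \<sigma>x] \<open>l \<le> t\<close> by simp
  finally show ?thesis
    using assms \<sigma>x by (simp add: score_eq_unif_marginal)
qed

lemma sum_rev_cond:
  assumes S: "S \<ge> 1" and q0: "\<forall>x\<in>states S d. q0 x \<ge> 0" "(\<Sum>x\<in>states S d. q0 x) = 1"
    and "l \<le> t" "t < T" and x: "x \<in> states S d"
  shows "(\<Sum>y\<in>states S d. rev_cond S d q0 T l t x y) = 1"
proof -
  have nonzero: "unif_marginal S d q0 s y \<noteq> 0" if "s > 0" for s y
    using unif_marginal_pos[OF S that q0, of y] by simp
  have "(\<Sum>y\<in>states S d. rev_cond S d q0 T l t x y * score S d q0 (T - t) (id y) y)
      = score S d q0 (T - l) (id x) x"
    by (rule rev_cond_score_martingale[OF assms bij_betw_id]) simp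
  then show ?thesis
    using assms nonzero[of "T - t"] nonzero[of "T - l"] by (simp add: score_eq_unif_marginal cong: sum.cong)
qed

theorem mainTheorem18:
  fixes S d :: nat and q0 :: "(nat \<Rightarrow> nat) \<Rightarrow> real" and T l t :: real
    and i c :: nat and xl :: "nat \<Rightarrow> nat"
  assumes q0_nonneg: "\<forall>x\<in>states S d. q0 x \<ge> 0"
    and q0_sum: "(\<Sum>x\<in>states S d. q0 x) = 1"
    and T_pos: "T > 0"
    and times: "0 \<le> l" "l < t" "t < T"
    and i_in: "i \<in> {1..d}" and c_in: "c \<in> {1..S}"
    and xl_in: "xl \<in> states S d"
  shows "(\<Sum>xt\<in>states S d. rev_cond S d q0 T l t xl xt * score S d q0 (T - t) (oplus S xt i c) xt)
           = score S d q0 (T - l) (oplus S xl i c) xl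
         \<and> (\<forall>g :: (nat \<Rightarrow> nat) \<Rightarrow> real.
              (\<Sum>xt\<in>states S d. rev_cond S d q0 T l t xl xt *
                 ((score S d q0 (T - l) (oplus S xl i c) xl - score S d q0 (T - t) (oplus S xt i c) xt) * g xl)) = 0)"
proof -
  have S: "S \<ge> 1" and "l \<le> t" using c_in times by auto
  let ?R = "rev_cond S d q0 T l t xl"
  let ?s = "\<lambda>u x. score S d q0 u (oplus S x i c) x"
  have martingale: "(\<Sum>y\<in>states S d. ?R y * ?s (T - t) y) = ?s (T - l) xl"
    using S q0_nonneg q0_sum \<open>l \<le> t\<close> times(3) xl_in bij_betw_oplus[OF S i_in]
    by (rule rev_cond_score_martingale) (auto intro: unif_kernel_oplus[OF S i_in])
  have total: "(\<Sum>y\<in>states S d. ?R y) = 1"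
    using S q0_nonneg q0_sum \<open>l \<le> t\<close> times(3) xl_in by (rule sum_rev_cond)
  have "(\<Sum>y\<in>states S d. ?R y * ((?s (T - l) xl - ?s (T - t) y) * g xl))
      = (?s (T - l) xl * (\<Sum>y\<in>states S d. ?R y) - (\<Sum>y\<in>states S d. ?R y * ?s (T - t) y)) * g xl" for g
    by (simp add: sum_distrib_left sum_distrib_right sum_subtractf algebra_simps)
  then show ?thesis using martingale total by simp
qed

end
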